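(* Let $1\le p\le\frac{\log 3}{\log 2}$ and let $\epsilon_1,\epsilon_2,\epsilon_3$ be acute angles with $\epsilon_1+\epsilon_2+\epsilon_3=\frac{\pi}{2}$. Then $\sum_{i=1}^3\sin^p\epsilon_i\ge 1$. *)

theory Defs
  imports Complex_Main
begin

end

theory Submission
  imports Defs "HOL-Analysis.Convex"
begin

(* With a = sin e1, b = sin e2, c = sin e3 the angle condition becomes
   a^2 + b^2 + c^2 + 2abc = 1, and as 0 < a, b, c < 1 it suffices to treat the largest
   exponent q = log 3 / log 2, for which 2^q = 3 and equality holds at a = b = c = 1/2.
   Two of a, b, c lie on the same side of 1/4.  If two are at most 1/4, Bernoulli's
   inequality for the third and t^q >= 16/9 t^2 for the small ones suffice.  Otherwise
   each t^q is bounded below by its third-order Taylor polynomial at 1/2 (the fourth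
   derivative of t^q is positive), and the resulting cubic inequality on the constraint
   surface is settled by a Positivstellensatz certificate. *)

lemma powr_ge_tangent:
  fixes r c t :: real
  assumes "0 < c" "0 < t" "r \<le> 0 \<or> 1 \<le> r"
  shows "c powr r + r * c powr (r - 1) * (t - c) \<le> t powr r"
proof -
  have "r * c powr (r - 1) * (t - c) \<le> t powr r - c powr r"
  proof (rule f''_imp_f'[where C = "{0<..}"])
    show "((\<lambda>x. x powr r) has_real_derivative r * x powr (r - 1)) (at x)" if "x \<in> {0<..}" for x
      using that by (auto intro!: derivative_eq_intros)
    show "((\<lambda>x. r * x powr (r - 1)) has_real_derivative r * ((r - 1) * x powr (r - 2))) (at x)"
      if "x \<in> {0<..}" for x
      using that by (auto intro!: derivative_eq_intros simp: diff_diff_eq)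
    have "0 \<le> r * (r - 1)"
      using assms(3) by (auto simp: zero_le_mult_iff)
    then show "0 \<le> r * ((r - 1) * x powr (r - 2))" for x
      by (metis mult.assoc mult_nonneg_nonneg powr_ge_zero)
  qed (use assms in auto)
  then show ?thesis
    by simp
qed

lemma powr_ge_taylor3:
  fixes q c x :: real
  assumes "0 < c" "0 < x" "1 \<le> q" "q \<le> 2"
  shows "c powr q + q * c powr (q - 1) * (x - c) + q * (q - 1) / 2 * c powr (q - 2) * (x - c)^2
           + q * (q - 1) * (q - 2) / 6 * c powr (q - 3) * (x - c)^3 \<le> x powr q"
proof -
  define T where "T y = c powr q + q * c powr (q - 1) * (y - c)
    + q * (q - 1) / 2 * c powr (q - 2) * (y - c)^2
    + q * (q - 1) * (q - 2) / 6 * c powr (q - 3) * (y - c)^3" for y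
  define T' where "T' y = q * c powr (q - 1) + q * (q - 1) * c powr (q - 2) * (y - c)
    + q * (q - 1) * (q - 2) / 2 * c powr (q - 3) * (y - c)^2" for y
  define T'' where "T'' y = q * (q - 1) * (c powr (q - 2) + (q - 2) * c powr (q - 3) * (y - c))"
    for y
  have "(q * c powr (q - 1) - T' c) * (x - c) \<le> (x powr q - T x) - (c powr q - T c)"
  proof (rule f''_imp_f'[where C = "{0<..}"])
    show "((\<lambda>y. y powr q - T y) has_real_derivative q * y powr (q - 1) - T' y) (at y)"
      if "y \<in> {0<..}" for y
      using that unfolding T_def T'_def
      by (auto intro!: derivative_eq_intros) (simp add: field_simps power2_eq_square power3_eq_cube)
    show "((\<lambda>y. q * y powr (q - 1) - T' y) has_real_derivative
            q * (q - 1) * y powr (q - 2) - T'' y) (at y)" if "y \<in> {0<..}" for y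
      using that unfolding T'_def T''_def
      by (auto intro!: derivative_eq_intros) (simp add: field_simps power2_eq_square)
    show "0 \<le> q * (q - 1) * y powr (q - 2) - T'' y" if "y \<in> {0<..}" for y
    proof -
      have "c powr (q - 2) + (q - 2) * c powr (q - 3) * (y - c) \<le> y powr (q - 2)"
        using powr_ge_tangent[of c y "q - 2"] that assms by simp
      then show ?thesis
        using assms unfolding T''_def by (simp add: right_diff_distrib[symmetric])
    qed
  qed (use assms in auto)
  then show ?thesis
    by (simp add: T_def T'_def)
qed

lemma powr_ge_cubic_at_half:
  fixes q x :: real
  assumes "1 \<le> q" "q \<le> 2" "2 powr q = 3" "0 < x"
  shows "1/3 + 2*q/3 * ((x - 1/2) + (q - 1) * (x - 1/2)^2 - 2/3 * (q - 1) * (2 - q) * (x - 1/2)^3)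
           \<le> x powr q"
proof -
  have halves: "(1/2::real) powr q = 1/3" "(1/2::real) powr (q - 1) = 2/3"
    "(1/2::real) powr (q - 2) = 4/3" "(1/2::real) powr (q - 3) = 8/3"
    using assms(3) by (simp_all add: powr_divide powr_diff)
  have "1/3 + q * (2/3) * (x - 1/2) + q * (q - 1) / 2 * (4/3) * (x - 1/2)^2
          + q * (q - 1) * (q - 2) / 6 * (8/3) * (x - 1/2)^3 \<le> x powr q"
    using powr_ge_taylor3[of "1/2" x q] assms unfolding halves by simp
  moreover have "1/3 + q * (2/3) * (x - 1/2) + q * (q - 1) / 2 * (4/3) * (x - 1/2)^2
          + q * (q - 1) * (q - 2) / 6 * (8/3) * (x - 1/2)^3
      = 1/3 + 2*q/3 * ((x - 1/2) + (q - 1) * (x - 1/2)^2 - 2/3 * (q - 1) * (2 - q) * (x - 1/2)^3)"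
    by algebra
  ultimately show ?thesis
    by simp
qed

lemma cubic_coeffs_lower_bound:
  fixes q t :: real
  assumes "79/50 \<le> q" "q \<le> 159/100" "\<bar>t\<bar> \<le> 1/2"
  shows "23/40 * t^2 - 4/25 * t^3 \<le> (q - 1) * t^2 - 2/3 * (q - 1) * (2 - q) * t^3"
proof -
  define w where "w = (q - 1) * (2 - q)"
  define m where "m = 2/3 * w - 4/25"
  have w_bounds: "29/50 * (41/100) \<le> w" "w \<le> 59/100 * (21/50)"
    unfolding w_def using assms by (intro mult_mono; simp)+
  have "\<bar>m\<bar> \<le> 1/150"
    unfolding m_def by (intro abs_leI; use w_bounds in linarith)
  then have "\<bar>t * m\<bar> \<le> 1/2 * (1/150)"
    unfolding abs_mult using assms(3) by (intro mult_mono) auto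
  then have "23/40 \<le> (q - 1) - t * m"
    using assms(1) abs_ge_self[of "t * m"] by linarith
  then have "23/40 * t^2 \<le> ((q - 1) - t * m) * t^2"
    by (intro mult_right_mono) auto
  moreover have "((q - 1) - t * m) * t^2 - 4/25 * t^3
      = (q - 1) * t^2 - 2/3 * (q - 1) * (2 - q) * t^3"
    unfolding m_def w_def by algebra
  ultimately show ?thesis
    by linarith
qed

text \<open>The coefficients below form a Positivstellensatz certificate: the cubic is a polynomial
  multiple of the (shifted) constraint plus a nonnegative combination of squares times products
  of the box constraints.\<close>

lemma cubic_nonneg_on_shifted_constraint:
  fixes x y z :: real
  assumes "-1/2 \<le> x" "x \<le> 1/2" "-1/4 \<le> y" "y \<le> 1/2" "-1/4 \<le> z" "z \<le> 1/2"
    and constraint: "3/2*(x+y+z) + x^2+y^2+z^2 + x*y+x*z+y*z + 2*x*y*z = 0"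
  shows "0 \<le> (x+y+z) + 23/40*(x^2+y^2+z^2) - 4/25*(x^3+y^3+z^3)"
proof -
  define S where "S =
      (622733996/27115634375) * (y - z)^2 * (1/2 - y) * (1/2 - z)
    + (52313033/13015504500) * (x - y - z)^2 * (z + 1/4)
    + (666560409/43385015000) * (x - y - z)^2 * (1/2 - x) * (1/2 - x)
    + (6706180382/81346903125) * (x - y - z)^2 * (1/2 - y) * (y + 1/4)
    + (610823762/81346903125) * (x - y - z)^2 * (y + 1/4) * (1/2 - z)
    + (10479250327/54231268750) * (x - y)^2 * (z + 1/4)
    + (6536505577/2603100900000) * (x - y + z)^2 * (1/2 - z)
    + (27509700221/325387612500) * (x - y + z)^2 * (1/2 - x) * (z + 1/4)
    + (1066095199/65077522500) * (x - y + z)^2 * (x + 1/2) * (1/2 - y)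
    + (37586282093/650775225000) * (x - y + z)^2 * (1/2 - y) * (1/2 - y)
    + (1333143553/54231268750) * (x - y + z)^2 * (1/2 - y) * (1/2 - z)
    + (18583056557/650775225000) * (x - y + z)^2 * (1/2 - z) * (z + 1/4)
    + (8434586387/81346903125) * (x - z)^2 * (1/2 - x) * (y + 1/4)
    + (8957482159/81346903125) * (x - z)^2 * (1/2 - z) * (z + 1/4)
    + (3577561656/27115634375) * x^2 * (1/2 - x) * (x + 1/2)
    + (60794777/5984140000) * (x + y - z)^2 * (x + 1/2)
    + (11485172473/325387612500) * (x + y - z)^2 * (y + 1/4)
    + (23190815609/650775225000) * (x + y - z)^2 * (1/2 - x) * (y + 1/4)
    + (7399882923/216925075000) * (x + y - z)^2 * (x + 1/2) * (x + 1/2)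
    + (5178682497/108462537500) * (x + y - z)^2 * (1/2 - y) * (y + 1/4)
    + (262617122/2805065625) * (x + y - z)^2 * (1/2 - z) * (1/2 - z)
    + (560504683/13015504500) * (x + y + z)^2 * (y + 1/4)
    + (4359463303/86770030000) * (x + y + z)^2 * (z + 1/4)
    + (447195207/5423126875) * (x + y + z)^2 * (x + 1/2) * (x + 1/2)
    + (30400876253/650775225000) * (x + y + z)^2 * (x + 1/2) * (1/2 - y)
    + (1208866057/65077522500) * (x + y + z)^2 * (x + 1/2) * (z + 1/4)
    + (9427051189/130155045000) * (x + y + z)^2 * (y + 1/4) * (y + 1/4)
    + (1172629661/26031009000) * (x + y + z)^2 * (z + 1/4) * (z + 1/4)"
  have "0 \<le> S"
    unfolding S_def
    by (intro add_nonneg_nonneg; intro mult_nonneg_nonneg zero_le_power2; use assms in linarith)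
  moreover have "(x+y+z) + 23/40*(x^2+y^2+z^2) - 4/25*(x^3+y^3+z^3)
      = (2/3 - 1091543253/4338501500*x - 2419266637/11220262500*y - 5456403194/27115634375*z)
          * (3/2*(x+y+z) + x^2+y^2+z^2 + x*y+x*z+y*z + 2*x*y*z) + S"
    unfolding S_def by algebra
  ultimately show ?thesis
    using constraint by simp
qed

lemma powr_sum_ge_1_two_small:
  fixes q a b c :: real
  assumes "1 \<le> q" "q \<le> 16/9" "2 powr q \<le> 3"
    and "0 < a" "a \<le> 1" "0 < b" "b \<le> 1/4" "0 < c" "c \<le> 1/4"
    and constraint: "a^2 + b^2 + c^2 + 2*a*b*c = 1"
  shows "1 \<le> a powr q + b powr q + c powr q"
proof -
  have small: "16/9 * t^2 \<le> t powr q" if "0 < t" "t \<le> 1/4" for t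
  proof -
    have "16 * t^2 = (4*t) powr 2"
      using that by (simp add: power2_eq_square)
    also have "\<dots> \<le> (4*t) powr q"
      using that assms by (intro powr_mono') auto
    also have "\<dots> = 2 powr q * 2 powr q * t powr q"
      using that by (simp add: powr_mult flip: powr_mult[of 2 2])
    also have "\<dots> \<le> 9 * t powr q"
      using assms(3) mult_mono[of "2 powr q" 3 "2 powr q" 3] by (intro mult_right_mono) auto
    finally show ?thesis
      by simp
  qed
  have "(1 + a) * (1 - a) = b^2 + c^2 + a * (2*b*c)"
    using constraint by (simp add: algebra_simps power2_eq_square)
  also have "\<dots> \<le> b^2 + c^2 + a * (b^2 + c^2)"
    using sum_squares_bound[of b c] assms
    by (intro add_left_mono mult_left_mono) (simp_all add: mult.assoc)
  also have "\<dots> = (1 + a) * (b^2 + c^2)"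
    by (simp add: algebra_simps)
  finally have "1 - a \<le> b^2 + c^2"
    using assms by simp
  then have "q * (1 - a) \<le> 16/9 * (b^2 + c^2)"
    using assms by (intro mult_mono) auto
  moreover have "1 + q * (a - 1) \<le> a powr q"
    using powr_ge_tangent[of 1 a q] assms by simp
  ultimately show ?thesis
    using small[of b] small[of c] assms by (simp add: algebra_simps)
qed

lemma powr_sum_ge_1_two_large:
  fixes q a b c :: real
  assumes "79/50 \<le> q" "q \<le> 159/100" "2 powr q = 3"
    and "0 < a" "a < 1" "1/4 \<le> b" "b < 1" "1/4 \<le> c" "c < 1"
    and constraint: "a^2 + b^2 + c^2 + 2*a*b*c = 1"
  shows "1 \<le> a powr q + b powr q + c powr q"
proof -
  define B where "B t = t + (q - 1) * t^2 - 2/3 * (q - 1) * (2 - q) * t^3" for t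
  define W where "W t = t + 23/40 * t^2 - 4/25 * t^3" for t :: real
  have powr_ge_B: "1/3 + 2*q/3 * B (t - 1/2) \<le> t powr q" if "0 < t" for t
    using powr_ge_cubic_at_half[of q t] that assms unfolding B_def by simp
  have B_ge_W: "W (t - 1/2) \<le> B (t - 1/2)" if "0 < t" "t < 1" for t
  proof -
    have "\<bar>t - 1/2\<bar> \<le> 1/2"
      using that by (intro abs_leI) auto
    then show ?thesis
      using cubic_coeffs_lower_bound[of q "t - 1/2"] assms unfolding B_def W_def by simp
  qed
  define x y z where "x = a - 1/2" and "y = b - 1/2" and "z = c - 1/2"
  have "3/2*(x+y+z) + x^2+y^2+z^2 + x*y+x*z+y*z + 2*x*y*z = a^2 + b^2 + c^2 + 2*a*b*c - 1"
    unfolding x_def y_def z_def by algebra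
  then have "0 \<le> (x+y+z) + 23/40*(x^2+y^2+z^2) - 4/25*(x^3+y^3+z^3)"
    using constraint assms
    by (intro cubic_nonneg_on_shifted_constraint) (simp_all add: x_def y_def z_def)
  also have "\<dots> = W x + W y + W z"
    unfolding W_def by algebra
  also have "\<dots> \<le> B x + B y + B z"
    unfolding x_def y_def z_def using B_ge_W assms by (intro add_mono) auto
  finally have "0 \<le> 2*q/3 * (B x + B y + B z)"
    using assms by simp
  then have "1 \<le> (1/3 + 2*q/3 * B x) + (1/3 + 2*q/3 * B y) + (1/3 + 2*q/3 * B z)"
    by (simp add: algebra_simps)
  also have "\<dots> \<le> a powr q + b powr q + c powr q"
    unfolding x_def y_def z_def using powr_ge_B assms by (intro add_mono) auto
  finally show ?thesis .
qed

lemma log2_3_bounds: "79/50 \<le> ln 3 / ln (2::real)" "ln 3 / ln (2::real) \<le> 159/100"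
proof -
  have "ln ((2::real)^79) \<le> ln (3^50)" "ln ((3::real)^100) \<le> ln (2^159)"
    by (subst ln_le_cancel_iff; simp)+
  then show "79/50 \<le> ln 3 / ln (2::real)" "ln 3 / ln (2::real) \<le> 159/100"
    by (simp_all only: ln_realpow) (simp_all add: field_simps)
qed

lemma powr_log2_3_sum_ge_1:
  fixes a b c :: real
  assumes "0 < a" "a < 1" "0 < b" "b < 1" "0 < c" "c < 1"
    and constraint: "a^2 + b^2 + c^2 + 2*a*b*c = 1"
  shows "1 \<le> a powr (ln 3 / ln 2) + b powr (ln 3 / ln 2) + c powr (ln 3 / ln 2)"
proof -
  define q where "q = ln 3 / ln (2::real)"
  have q: "79/50 \<le> q" "q \<le> 159/100" "2 powr q = 3"
    using log2_3_bounds unfolding q_def by (simp_all add: powr_def)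
  have pair: "1 \<le> u powr q + v powr q + w powr q"
    if "0 < u" "u < 1" "0 < v" "v < 1" "0 < w" "w < 1" "v \<le> 1/4 \<longleftrightarrow> w \<le> 1/4"
      and "u^2 + v^2 + w^2 + 2*u*v*w = 1" for u v w
  proof (cases "v \<le> 1/4")
    case True
    then show ?thesis
      using powr_sum_ge_1_two_small[of q u v w] that q by simp
  next
    case False
    then show ?thesis
      using powr_sum_ge_1_two_large[of q u v w] that q by simp
  qed
  have "(b \<le> 1/4 \<longleftrightarrow> c \<le> 1/4) \<or> (a \<le> 1/4 \<longleftrightarrow> c \<le> 1/4) \<or> (a \<le> 1/4 \<longleftrightarrow> b \<le> 1/4)"
    by blast
  moreover have "b^2 + a^2 + c^2 + 2*b*a*c = 1" "c^2 + a^2 + b^2 + 2*c*a*b = 1"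
    using constraint by (simp_all add: algebra_simps)
  ultimately have "1 \<le> a powr q + b powr q + c powr q"
    using pair[of a b c] pair[of b a c] pair[of c a b] assms by fastforce
  then show ?thesis
    unfolding q_def .
qed

lemma sin_sum_pi_half_constraint:
  fixes e1 e2 e3 :: real
  assumes "e1 + e2 + e3 = pi / 2"
  shows "(sin e1)^2 + (sin e2)^2 + (sin e3)^2 + 2 * sin e1 * sin e2 * sin e3 = 1"
proof -
  have "e3 = pi / 2 - (e1 + e2)"
    using assms by simp
  then have "sin e3 = cos (e1 + e2)"
    by (simp add: cos_sin_eq)
  then have "(sin e3 + sin e1 * sin e2)^2 = (cos e1)^2 * (cos e2)^2"
    by (simp add: cos_add power_mult_distrib)
  also have "\<dots> = (1 - (sin e1)^2) * (1 - (sin e2)^2)"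
    by (simp add: cos_squared_eq)
  finally show ?thesis
    by algebra
qed

theorem lemma2p9:
  fixes p e1 e2 e3 :: real
  assumes "1 \<le> p" and "p \<le> ln 3 / ln 2"
    and "0 < e1" and "e1 < pi / 2"
    and "0 < e2" and "e2 < pi / 2"
    and "0 < e3" and "e3 < pi / 2"
    and "e1 + e2 + e3 = pi / 2"
  shows "sin e1 powr p + sin e2 powr p + sin e3 powr p \<ge> 1"
proof -
  have sin_bounds: "0 < sin e \<and> sin e < 1" if "0 < e" "e < pi / 2" for e
    using that sin_gt_zero[of e] sin_monotone_2pi[of e "pi / 2"] by auto
  have powr_mono_exp: "sin e powr (ln 3 / ln 2) \<le> sin e powr p" if "0 < e" "e < pi / 2" for e
    using sin_bounds[OF that] assms(1,2) by (intro powr_mono') auto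
  have "1 \<le> sin e1 powr (ln 3 / ln 2) + sin e2 powr (ln 3 / ln 2) + sin e3 powr (ln 3 / ln 2)"
    using powr_log2_3_sum_ge_1 sin_sum_pi_half_constraint[OF assms(9)] sin_bounds assms(3-8)
    by blast
  also have "\<dots> \<le> sin e1 powr p + sin e2 powr p + sin e3 powr p"
    using assms(3-8) by (intro add_mono powr_mono_exp)
  finally show ?thesis .
qed

end
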